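(* A semiring $(S,+,\cdot)$ is a rectangular skew-ring if and only if it is isomorphic to a direct product of a rectangular band semiring and a skew-ring.
   Context: A semiring $(S,+,\cdot)$ is an algebra with two associative binary operations such that $a(b+c)=ab+ac$ and $(b+c)a=ba+ca$ for all $a,b,c\in S$. An element $a$ is completely regular if there is $x\in S$ with $a=a+x+a$, $a+x=x+a$ and $a(a+x)=a+x$; $S$ is completely regular if all its elements are. $\mathscr{J}^+$ denotes Green's $\mathscr{J}$-relation of the semigroup $(S,+)$. A completely simple semiring is a completely regular semiring with $\mathscr{J}^+=S\times S$. $E^+(S)$ is the set of additive idempotents of $S$. A rectangular skew-ring is a completely simple semiring $S$ such that $E^+(S)$ is a subsemigroup of $(S,+)$. A skew-ring is a semiring whose additive reduct is a (not necessarily commutative) group. A rectangular band semiring is a semiring in which $(S,\cdot)$ is a band and $(S,+)$ is a rectangular band (i.e. $a=a+x+a$ for all $a,x\in S$). Direct products of semirings carry componentwise operations. *)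

theory Defs
  imports Main
begin

record 'a srng =
  scar :: "'a set"
  sadd :: "'a \<Rightarrow> 'a \<Rightarrow> 'a"
  smul :: "'a \<Rightarrow> 'a \<Rightarrow> 'a"

definition semiring :: "'a srng \<Rightarrow> bool" where
  "semiring S \<longleftrightarrow>
     (\<forall>a\<in>scar S. \<forall>b\<in>scar S. sadd S a b \<in> scar S \<and> smul S a b \<in> scar S) \<and>
     (\<forall>a\<in>scar S. \<forall>b\<in>scar S. \<forall>c\<in>scar S.
        sadd S (sadd S a b) c = sadd S a (sadd S b c) \<and>
        smul S (smul S a b) c = smul S a (smul S b c) \<and>
        smul S a (sadd S b c) = sadd S (smul S a b) (smul S a c) \<and>
        smul S (sadd S b c) a = sadd S (smul S b a) (smul S c a))"

definition completely_regular_elem :: "'a srng \<Rightarrow> 'a \<Rightarrow> bool" where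
  "completely_regular_elem S a \<longleftrightarrow>
     (\<exists>x\<in>scar S. a = sadd S (sadd S a x) a \<and> sadd S a x = sadd S x a \<and>
                 smul S a (sadd S a x) = sadd S a x)"

definition completely_regular :: "'a srng \<Rightarrow> bool" where
  "completely_regular S \<longleftrightarrow> semiring S \<and> (\<forall>a\<in>scar S. completely_regular_elem S a)"

text \<open>Principal two-sided ideal of a in the semigroup (S,+), i.e. S^1 + a + S^1.\<close>
definition add_ideal :: "'a srng \<Rightarrow> 'a \<Rightarrow> 'a set" where
  "add_ideal S a = {a} \<union> {sadd S x a | x. x \<in> scar S} \<union> {sadd S a y | y. y \<in> scar S}
      \<union> {sadd S (sadd S x a) y | x y. x \<in> scar S \<and> y \<in> scar S}"

definition J_plus :: "'a srng \<Rightarrow> ('a \<times> 'a) set" where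
  "J_plus S = {(a, b). a \<in> scar S \<and> b \<in> scar S \<and> add_ideal S a = add_ideal S b}"

definition completely_simple :: "'a srng \<Rightarrow> bool" where
  "completely_simple S \<longleftrightarrow> completely_regular S \<and> J_plus S = scar S \<times> scar S"

definition E_plus :: "'a srng \<Rightarrow> 'a set" where
  "E_plus S = {e \<in> scar S. sadd S e e = e}"

definition rectangular_skew_ring :: "'a srng \<Rightarrow> bool" where
  "rectangular_skew_ring S \<longleftrightarrow> completely_simple S \<and>
     (\<forall>e\<in>E_plus S. \<forall>f\<in>E_plus S. sadd S e f \<in> E_plus S)"

definition skew_ring :: "'a srng \<Rightarrow> bool" where
  "skew_ring S \<longleftrightarrow> semiring S \<and>
     (\<exists>z\<in>scar S. (\<forall>a\<in>scar S. sadd S z a = a \<and> sadd S a z = a) \<and>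
                 (\<forall>a\<in>scar S. \<exists>b\<in>scar S. sadd S a b = z \<and> sadd S b a = z))"

definition rectangular_band_semiring :: "'a srng \<Rightarrow> bool" where
  "rectangular_band_semiring S \<longleftrightarrow> semiring S \<and>
     (\<forall>a\<in>scar S. smul S a a = a) \<and>
     (\<forall>a\<in>scar S. \<forall>x\<in>scar S. sadd S (sadd S a x) a = a)"

definition direct_prod :: "'b srng \<Rightarrow> 'c srng \<Rightarrow> ('b \<times> 'c) srng" where
  "direct_prod B R = \<lparr> scar = scar B \<times> scar R,
     sadd = (\<lambda>(b1, r1) (b2, r2). (sadd B b1 b2, sadd R r1 r2)),
     smul = (\<lambda>(b1, r1) (b2, r2). (smul B b1 b2, smul R r1 r2)) \<rparr>"

definition srng_iso :: "'a srng \<Rightarrow> 'b srng \<Rightarrow> bool" where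
  "srng_iso S T \<longleftrightarrow> (\<exists>f. bij_betw f (scar S) (scar T) \<and>
     (\<forall>a\<in>scar S. \<forall>b\<in>scar S. f (sadd S a b) = sadd T (f a) (f b) \<and>
                             f (smul S a b) = smul T (f a) (f b)))"

end

theory Submission
  imports Defs
begin

text \<open>In a rectangular skew ring every element \<open>a\<close> has a local zero \<open>0\<^sub>a\<close>, the identity of
  the maximal additive subgroup containing \<open>a\<close>, and \<open>a \<mapsto> 0\<^sub>a\<close> is a homomorphism onto the
  additive idempotents \<open>E\<^sup>+\<close>. Idempotents of a completely simple semigroup are primitive, so
  closure of \<open>E\<^sup>+\<close> under \<open>+\<close> forces \<open>e + f + e = e\<close>: \<open>E\<^sup>+\<close> is a rectangular band semiring and
  idempotents can be deleted from the inside of any sum, \<open>w + e + v = w + v\<close>. Fixing one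
  idempotent \<open>e\<close>, the latter makes \<open>a \<mapsto> (0\<^sub>a, e + a + e)\<close> an isomorphism onto
  \<open>E\<^sup>+ \<times> H\<^sub>e\<close>, with \<open>H\<^sub>e\<close> the additive group at \<open>e\<close> made a skew ring by the product
  \<open>e + pq + e\<close>. Conversely, a product of a rectangular band semiring and a skew ring is directly
  seen to be a rectangular skew ring, and being one is invariant under isomorphism.\<close>

lemma semiring_closed:
  assumes "semiring S" "a \<in> scar S" "b \<in> scar S"
  shows "sadd S a b \<in> scar S" "smul S a b \<in> scar S"
  using assms unfolding semiring_def by auto

lemma semiring_assoc:
  assumes "semiring S" "a \<in> scar S" "b \<in> scar S" "c \<in> scar S"
  shows "sadd S (sadd S a b) c = sadd S a (sadd S b c)"
    "smul S (smul S a b) c = smul S a (smul S b c)"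
  using assms unfolding semiring_def by auto

lemma semiring_distrib:
  assumes "semiring S" "a \<in> scar S" "b \<in> scar S" "c \<in> scar S"
  shows "smul S a (sadd S b c) = sadd S (smul S a b) (smul S a c)"
    "smul S (sadd S b c) a = sadd S (smul S b a) (smul S c a)"
  using assms unfolding semiring_def by auto

lemma semiring_E_plus_mul_closed:
  assumes S: "semiring S" and "e \<in> E_plus S" and s: "s \<in> scar S"
  shows "smul S e s \<in> E_plus S" "smul S s e \<in> E_plus S"
proof -
  have e: "e \<in> scar S" "sadd S e e = e" using assms(2) unfolding E_plus_def by auto
  show "smul S e s \<in> E_plus S"
    using semiring_distrib(2)[OF S s e(1) e(1)] e semiring_closed[OF S e(1) s]
    unfolding E_plus_def by simp
  show "smul S s e \<in> E_plus S"
    using semiring_distrib(1)[OF S s e(1) e(1)] e semiring_closed[OF S s e(1)]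
    unfolding E_plus_def by simp
qed

lemma rectangular_band_add_idem:
  assumes "rectangular_band_semiring B" and b: "b \<in> scar B"
  shows "sadd B b b = b"
proof -
  have sr: "semiring B" and rect: "\<And>x. x \<in> scar B \<Longrightarrow> sadd B (sadd B b x) b = b"
    using assms unfolding rectangular_band_semiring_def by auto
  have "b = sadd B (sadd B b (sadd B b b)) b" using rect b semiring_closed[OF sr] by simp
  also have "\<dots> = sadd B (sadd B (sadd B b b) b) b" using b by (simp add: semiring_assoc[OF sr])
  also have "\<dots> = sadd B b b" using rect b by simp
  finally show ?thesis by simp
qed

definition add_group_zero :: "'a srng \<Rightarrow> 'a \<Rightarrow> bool" where
  "add_group_zero R z \<longleftrightarrow> z \<in> scar R \<and>
     (\<forall>a\<in>scar R. sadd R z a = a \<and> sadd R a z = a) \<and>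
     (\<forall>a\<in>scar R. \<exists>b\<in>scar R. sadd R a b = z \<and> sadd R b a = z)"

lemma skew_ring_iff: "skew_ring R \<longleftrightarrow> semiring R \<and> (\<exists>z. add_group_zero R z)"
  unfolding skew_ring_def add_group_zero_def by blast

lemma add_group_zero_unique_idem:
  assumes "semiring R" "add_group_zero R z" "r \<in> scar R" "sadd R r r = r"
  shows "r = z"
proof -
  obtain b where b: "b \<in> scar R" "sadd R b r = z" "z \<in> scar R"
    using assms(2,3) unfolding add_group_zero_def by blast
  have "z = sadd R b (sadd R r r)" using assms(4) b by simp
  also have "\<dots> = sadd R z r" using b assms(3) by (simp flip: semiring_assoc[OF assms(1)])
  also have "\<dots> = r" using assms(2,3) unfolding add_group_zero_def by blast
  finally show ?thesis by simp
qed

lemma add_group_zero_mul_right: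
  assumes "semiring R" "add_group_zero R z" "r \<in> scar R"
  shows "smul R r z = z"
proof (rule add_group_zero_unique_idem[OF assms(1,2)])
  have z: "z \<in> scar R" "sadd R z z = z" using assms(2) unfolding add_group_zero_def by auto
  show "smul R r z \<in> scar R" using semiring_closed[OF assms(1) assms(3) z(1)] by simp
  show "sadd R (smul R r z) (smul R r z) = smul R r z"
    using z assms(3) by (simp flip: semiring_distrib[OF assms(1)])
qed

lemma add_idealI:
  "a \<in> add_ideal S a"
  "x \<in> scar S \<Longrightarrow> sadd S x a \<in> add_ideal S a"
  "y \<in> scar S \<Longrightarrow> sadd S a y \<in> add_ideal S a"
  "x \<in> scar S \<Longrightarrow> y \<in> scar S \<Longrightarrow> sadd S (sadd S x a) y \<in> add_ideal S a"
  unfolding add_ideal_def by blast+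

lemma add_idealE:
  assumes "c \<in> add_ideal S a"
  obtains "c = a"
    | x where "x \<in> scar S" "c = sadd S x a"
    | y where "y \<in> scar S" "c = sadd S a y"
    | x y where "x \<in> scar S" "y \<in> scar S" "c = sadd S (sadd S x a) y"
  using assms unfolding add_ideal_def by blast

lemma add_ideal_subset_carrier:
  assumes "semiring S" "a \<in> scar S" shows "add_ideal S a \<subseteq> scar S"
  using assms semiring_closed[OF assms(1)] by (auto elim: add_idealE)

section \<open>Products of a rectangular band semiring and a skew ring\<close>

lemma direct_prod_simps [simp]:
  "scar (direct_prod B R) = scar B \<times> scar R"
  "sadd (direct_prod B R) (b1, r1) (b2, r2) = (sadd B b1 b2, sadd R r1 r2)"
  "smul (direct_prod B R) (b1, r1) (b2, r2) = (smul B b1 b2, smul R r1 r2)"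
  by (simp_all add: direct_prod_def)

lemma semiring_direct_prod:
  assumes "semiring B" "semiring R"
  shows "semiring (direct_prod B R)"
  using assms unfolding semiring_def by force

locale band_group_prod =
  fixes B :: "'b srng" and R :: "'c srng" and z :: 'c
  assumes band: "rectangular_band_semiring B"
    and ring: "semiring R" and zero: "add_group_zero R z"
begin

abbreviation "P \<equiv> direct_prod B R"

lemma band_semiring: "semiring B"
  using band unfolding rectangular_band_semiring_def by simp

lemma band_rect: "a \<in> scar B \<Longrightarrow> x \<in> scar B \<Longrightarrow> sadd B (sadd B a x) a = a"
  using band unfolding rectangular_band_semiring_def by simp

lemma zero_simps:
  "z \<in> scar R" "r \<in> scar R \<Longrightarrow> sadd R z r = r" "r \<in> scar R \<Longrightarrow> sadd R r z = r"
  using zero unfolding add_group_zero_def by auto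

lemma neg_exists:
  assumes "r \<in> scar R" obtains r' where "r' \<in> scar R" "sadd R r r' = z" "sadd R r' r = z"
  using zero assms unfolding add_group_zero_def by blast

lemma prod_completely_regular_elem:
  assumes "p \<in> scar P" shows "completely_regular_elem P p"
proof -
  obtain b r where p: "p = (b, r)" "b \<in> scar B" "r \<in> scar R" using assms by auto
  obtain r' where r': "r' \<in> scar R" "sadd R r r' = z" "sadd R r' r = z" using neg_exists[OF p(3)] .
  have b_add_idem: "sadd B b b = b" by (rule rectangular_band_add_idem[OF band p(2)])
  have b_mul_idem: "smul B b b = b" using band p(2) unfolding rectangular_band_semiring_def by simp
  have rz: "smul R r z = z" by (rule add_group_zero_mul_right[OF ring zero p(3)])
  show ?thesis unfolding completely_regular_elem_def
  proof (intro bexI[of _ "(b, r')"] conjI)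
    show "p = sadd P (sadd P p (b, r')) p"
      using p r' b_add_idem zero_simps(2) by simp
    show "sadd P p (b, r') = sadd P (b, r') p" using p r' by simp
    show "smul P p (sadd P p (b, r')) = sadd P p (b, r')" using p r' b_add_idem b_mul_idem rz by simp
  qed (use p r' in simp)
qed

lemma prod_add_ideal:
  assumes "p \<in> scar P" shows "add_ideal P p = scar P"
proof
  show "add_ideal P p \<subseteq> scar P"
    by (rule add_ideal_subset_carrier[OF semiring_direct_prod[OF band_semiring ring] assms])
  show "scar P \<subseteq> add_ideal P p"
  proof
    fix q assume "q \<in> scar P"
    then obtain b' r' where q: "q = (b', r')" "b' \<in> scar B" "r' \<in> scar R" by auto
    obtain b r where p: "p = (b, r)" "b \<in> scar B" "r \<in> scar R" using assms by auto
    obtain s where s: "s \<in> scar R" "sadd R r s = z" "sadd R s r = z" using neg_exists[OF p(3)] .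
    have r's: "sadd R r' s \<in> scar R" using q s semiring_closed[OF ring] by simp
    have "sadd R (sadd R (sadd R r' s) r) z = r'"
      using p q s zero_simps by (simp add: semiring_assoc[OF ring] r's)
    moreover have "sadd B (sadd B b' b) b' = b'" using band_rect p q by simp
    ultimately have "q = sadd P (sadd P (b', sadd R r' s) p) (b', z)"
      using p q by simp
    then show "q \<in> add_ideal P p"
      using add_idealI(4)[of "(b', sadd R r' s)" P "(b', z)" p] q r's zero_simps by simp
  qed
qed

lemma prod_E_plus: "E_plus P = scar B \<times> {z}"
proof (intro set_eqI iffI)
  fix p assume "p \<in> E_plus P"
  then obtain b r where p: "p = (b, r)" "b \<in> scar B" "r \<in> scar R" "sadd R r r = r"
    unfolding E_plus_def by auto
  then show "p \<in> scar B \<times> {z}" using add_group_zero_unique_idem[OF ring zero] by simp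
next
  fix p assume "p \<in> scar B \<times> {z}"
  then obtain b where "p = (b, z)" "b \<in> scar B" by auto
  then show "p \<in> E_plus P"
    unfolding E_plus_def using rectangular_band_add_idem[OF band] zero_simps by simp
qed

lemma prod_rectangular_skew_ring: "rectangular_skew_ring P"
proof -
  have "completely_regular P"
    unfolding completely_regular_def
    using semiring_direct_prod[OF band_semiring ring] prod_completely_regular_elem by blast
  moreover have "J_plus P = scar P \<times> scar P"
    unfolding J_plus_def using prod_add_ideal by (auto simp del: direct_prod_simps)
  moreover have "sadd P e f \<in> E_plus P" if ef: "e \<in> E_plus P" "f \<in> E_plus P" for e f
  proof -
    obtain b b' where "e = (b, z)" "f = (b', z)" "b \<in> scar B" "b' \<in> scar B"
      using ef unfolding prod_E_plus by blast
    then show ?thesis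
      using semiring_closed[OF band_semiring] zero_simps(2)[OF zero_simps(1)]
      unfolding prod_E_plus by simp
  qed
  ultimately show ?thesis
    unfolding rectangular_skew_ring_def completely_simple_def by blast
qed

end

lemma direct_prod_rectangular_skew_ring:
  assumes "rectangular_band_semiring B" "skew_ring R"
  shows "rectangular_skew_ring (direct_prod B R)"
proof -
  obtain z where "semiring R" "add_group_zero R z" using assms(2) unfolding skew_ring_iff by blast
  then interpret band_group_prod B R z using assms(1) by unfold_locales
  show ?thesis by (rule prod_rectangular_skew_ring)
qed

section \<open>Isomorphisms reflect rectangular skew rings\<close>

text \<open>\<open>semiring S\<close> cannot be pulled back along \<open>f\<close>, which is only constrained on \<open>scar S\<close>.\<close>
locale srng_isomorphism =
  fixes S :: "'a srng" and T :: "'b srng" and f :: "'a \<Rightarrow> 'b"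
  assumes semiring: "semiring S"
    and bij: "bij_betw f (scar S) (scar T)"
    and hom_add: "\<And>a b. a \<in> scar S \<Longrightarrow> b \<in> scar S \<Longrightarrow> f (sadd S a b) = sadd T (f a) (f b)"
    and hom_mul: "\<And>a b. a \<in> scar S \<Longrightarrow> b \<in> scar S \<Longrightarrow> f (smul S a b) = smul T (f a) (f b)"
begin

lemma map_in: "a \<in> scar S \<Longrightarrow> f a \<in> scar T"
  using bij by (rule bij_betw_apply)

lemma map_inj: "a \<in> scar S \<Longrightarrow> b \<in> scar S \<Longrightarrow> f a = f b \<Longrightarrow> a = b"
  using bij unfolding bij_betw_def by (blast dest: inj_onD)

lemma map_onto:
  assumes "y \<in> scar T" obtains x where "x \<in> scar S" "y = f x"
  using bij assms unfolding bij_betw_def by blast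

lemmas closed = semiring_closed[OF semiring]

lemma completely_regular_elem_reflect:
  assumes a: "a \<in> scar S" and "completely_regular_elem T (f a)"
  shows "completely_regular_elem S a"
proof -
  obtain y where y: "y \<in> scar T" "f a = sadd T (sadd T (f a) y) (f a)"
      "sadd T (f a) y = sadd T y (f a)" "smul T (f a) (sadd T (f a) y) = sadd T (f a) y"
    using assms(2) unfolding completely_regular_elem_def by blast
  obtain x where x: "x \<in> scar S" "y = f x" using map_onto[OF y(1)] .
  have "a = sadd S (sadd S a x) a"
    using y x a closed by (intro map_inj) (simp_all add: hom_add)
  moreover have "sadd S a x = sadd S x a"
    using y x a closed by (intro map_inj) (simp_all add: hom_add)
  moreover have "smul S a (sadd S a x) = sadd S a x"
    using y x a closed by (intro map_inj) (simp_all add: hom_add hom_mul)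
  ultimately show ?thesis unfolding completely_regular_elem_def using x(1) by blast
qed

lemma add_ideal_iff:
  assumes a: "a \<in> scar S" and c: "c \<in> scar S"
  shows "c \<in> add_ideal S a \<longleftrightarrow> f c \<in> add_ideal T (f a)"
proof
  assume "c \<in> add_ideal S a"
  then show "f c \<in> add_ideal T (f a)"
    by (cases rule: add_idealE) (use a map_in closed in \<open>simp_all add: hom_add add_idealI\<close>)
next
  assume "f c \<in> add_ideal T (f a)"
  then show "c \<in> add_ideal S a"
  proof (cases rule: add_idealE)
    case 1
    then show ?thesis using map_inj[OF c a] add_idealI(1) by simp
  next
    case (2 x')
    then obtain x where "x \<in> scar S" "f c = f (sadd S x a)"
      using map_onto a by (metis hom_add)
    then show ?thesis using map_inj a c closed add_idealI(2) by metis
  next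
    case (3 y')
    then obtain y where "y \<in> scar S" "f c = f (sadd S a y)"
      using map_onto a by (metis hom_add)
    then show ?thesis using map_inj a c closed add_idealI(3) by metis
  next
    case (4 x' y')
    then obtain x y where "x \<in> scar S" "y \<in> scar S" "f c = f (sadd S (sadd S x a) y)"
      using map_onto a closed by (metis hom_add)
    then show ?thesis using map_inj a c closed add_idealI(4) by metis
  qed
qed

lemma E_plus_iff:
  assumes "e \<in> scar S" shows "e \<in> E_plus S \<longleftrightarrow> f e \<in> E_plus T"
  using assms map_in map_inj closed unfolding E_plus_def by (auto simp flip: hom_add)

lemma rectangular_skew_ring_reflect:
  assumes "rectangular_skew_ring T" shows "rectangular_skew_ring S"
proof -
  have crT: "\<forall>y\<in>scar T. completely_regular_elem T y" and JT: "J_plus T = scar T \<times> scar T"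
    and ET: "\<forall>e\<in>E_plus T. \<forall>e'\<in>E_plus T. sadd T e e' \<in> E_plus T"
    using assms unfolding rectangular_skew_ring_def completely_simple_def completely_regular_def
    by auto
  have "completely_regular S"
    unfolding completely_regular_def
    using semiring crT completely_regular_elem_reflect map_in by blast
  moreover have "add_ideal S a = add_ideal S b" if ab: "a \<in> scar S" "b \<in> scar S" for a b
  proof -
    have "add_ideal T (f a) = add_ideal T (f b)" using JT ab map_in unfolding J_plus_def by blast
    then show ?thesis
      using ab add_ideal_iff add_ideal_subset_carrier[OF semiring] by blast
  qed
  then have "J_plus S = scar S \<times> scar S" unfolding J_plus_def by blast
  moreover have "sadd S e e' \<in> E_plus S" if "e \<in> E_plus S" "e' \<in> E_plus S" for e e'
    using that ET E_plus_iff closed hom_add unfolding E_plus_def by auto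
  ultimately show ?thesis unfolding rectangular_skew_ring_def completely_simple_def by blast
qed

end

lemma srng_iso_reflects_rectangular_skew_ring:
  assumes "semiring S" "srng_iso S T" "rectangular_skew_ring T"
  shows "rectangular_skew_ring S"
proof -
  obtain f where "bij_betw f (scar S) (scar T)"
    "\<forall>a\<in>scar S. \<forall>b\<in>scar S. f (sadd S a b) = sadd T (f a) (f b) \<and> f (smul S a b) = smul T (f a) (f b)"
    using assms(2) unfolding srng_iso_def by blast
  then interpret srng_isomorphism S T f using assms(1) by unfold_locales auto
  show ?thesis using assms(3) by (rule rectangular_skew_ring_reflect)
qed

section \<open>Local zeros in completely simple semirings\<close>

locale completely_regular_semiring =
  fixes S :: "'a srng"
  assumes completely_regular: "completely_regular S"
begin

abbreviation oplus (infixl "\<oplus>" 65) where "a \<oplus> b \<equiv> sadd S a b"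
abbreviation odot (infixl "\<odot>" 70) where "a \<odot> b \<equiv> smul S a b"

lemma semiring: "semiring S"
  using completely_regular unfolding completely_regular_def by simp

lemma closed [simp]:
  "a \<in> scar S \<Longrightarrow> b \<in> scar S \<Longrightarrow> a \<oplus> b \<in> scar S"
  "a \<in> scar S \<Longrightarrow> b \<in> scar S \<Longrightarrow> a \<odot> b \<in> scar S"
  using semiring_closed[OF semiring] by auto

lemma assoc [simp]:
  "a \<in> scar S \<Longrightarrow> b \<in> scar S \<Longrightarrow> c \<in> scar S \<Longrightarrow> a \<oplus> b \<oplus> c = a \<oplus> (b \<oplus> c)"
  "a \<in> scar S \<Longrightarrow> b \<in> scar S \<Longrightarrow> c \<in> scar S \<Longrightarrow> a \<odot> b \<odot> c = a \<odot> (b \<odot> c)"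
  using semiring_assoc[OF semiring] by auto

lemmas distrib = semiring_distrib[OF semiring]

lemma E_plus_simps [simp]:
  "e \<in> E_plus S \<Longrightarrow> e \<in> scar S" "e \<in> E_plus S \<Longrightarrow> e \<oplus> e = e"
  unfolding E_plus_def by auto

lemma E_plus_absorb [simp]: "e \<in> E_plus S \<Longrightarrow> x \<in> scar S \<Longrightarrow> e \<oplus> (e \<oplus> x) = e \<oplus> x"
  by (simp flip: assoc(1))

lemma E_plus_mul_closed [simp]:
  "e \<in> E_plus S \<Longrightarrow> s \<in> scar S \<Longrightarrow> e \<odot> s \<in> E_plus S"
  "e \<in> E_plus S \<Longrightarrow> s \<in> scar S \<Longrightarrow> s \<odot> e \<in> E_plus S"
  using semiring_E_plus_mul_closed[OF semiring] by auto

definition rel_inv :: "'a \<Rightarrow> 'a" where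
  "rel_inv a = (SOME x. x \<in> scar S \<and> a = a \<oplus> x \<oplus> a \<and> a \<oplus> x = x \<oplus> a \<and> a \<odot> (a \<oplus> x) = a \<oplus> x)"

text \<open>\<open>local_zero a\<close> is the identity of the maximal subgroup of \<open>(S,+)\<close> containing \<open>a\<close>.\<close>
definition local_zero :: "'a \<Rightarrow> 'a" where
  "local_zero a = a \<oplus> rel_inv a"

lemma rel_inv:
  assumes "a \<in> scar S"
  shows "rel_inv a \<in> scar S" "a \<oplus> (rel_inv a \<oplus> a) = a" "a \<oplus> rel_inv a = rel_inv a \<oplus> a"
    "a \<odot> (a \<oplus> rel_inv a) = a \<oplus> rel_inv a"
proof -
  have "\<exists>x. x \<in> scar S \<and> a = a \<oplus> x \<oplus> a \<and> a \<oplus> x = x \<oplus> a \<and> a \<odot> (a \<oplus> x) = a \<oplus> x"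
    using completely_regular assms
    unfolding completely_regular_def completely_regular_elem_def by blast
  from someI_ex[OF this, folded rel_inv_def]
  have x: "rel_inv a \<in> scar S" "a = a \<oplus> rel_inv a \<oplus> a" "a \<oplus> rel_inv a = rel_inv a \<oplus> a"
    "a \<odot> (a \<oplus> rel_inv a) = a \<oplus> rel_inv a"
    by blast+
  then show "rel_inv a \<in> scar S" "a \<oplus> rel_inv a = rel_inv a \<oplus> a"
    "a \<odot> (a \<oplus> rel_inv a) = a \<oplus> rel_inv a"
    by blast+
  show "a \<oplus> (rel_inv a \<oplus> a) = a" using x(1,2) assms by (metis assoc(1))
qed

lemma local_zero_alt: "a \<in> scar S \<Longrightarrow> local_zero a = rel_inv a \<oplus> a"
  using rel_inv unfolding local_zero_def by simp

lemma local_zero [simp]: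
  assumes "a \<in> scar S"
  shows "local_zero a \<in> scar S" "local_zero a \<oplus> a = a" "a \<oplus> local_zero a = a"
    "local_zero a \<oplus> local_zero a = local_zero a" "a \<odot> local_zero a = local_zero a"
proof -
  note x = rel_inv[OF assms]
  show z_in: "local_zero a \<in> scar S" using x assms unfolding local_zero_def by simp
  show z_left: "local_zero a \<oplus> a = a" using x assms unfolding local_zero_def by (metis assoc(1))
  show "a \<oplus> local_zero a = a" using x assms unfolding local_zero_def by metis
  show "local_zero a \<oplus> local_zero a = local_zero a"
    using x assms z_left z_in unfolding local_zero_def by (metis assoc(1))
  show "a \<odot> local_zero a = local_zero a" using x unfolding local_zero_def by metis
qed

lemma local_zero_E_plus [simp]: "a \<in> scar S \<Longrightarrow> local_zero a \<in> E_plus S"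
  unfolding E_plus_def by simp

lemma local_zero_absorb [simp]:
  assumes "a \<in> scar S" "b \<in> scar S"
  shows "local_zero a \<oplus> (a \<oplus> b) = a \<oplus> b" "a \<oplus> (local_zero a \<oplus> b) = a \<oplus> b"
  using assms by (simp_all flip: assoc(1))

end

locale completely_simple_semiring = completely_regular_semiring +
  assumes J_full: "J_plus S = scar S \<times> scar S"
begin

lemma add_ideal_sandwich:
  assumes a: "a \<in> scar S" and b: "b \<in> scar S"
  obtains u v where "u \<in> scar S" "v \<in> scar S" "b = u \<oplus> a \<oplus> v"
proof -
  have "add_ideal S a = add_ideal S b" using J_full a b unfolding J_plus_def by blast
  then have "b \<in> add_ideal S a" using add_idealI(1) by metis
  then show ?thesis
  proof (cases rule: add_idealE)
    case 1
    then show ?thesis using that[of "local_zero a" "local_zero a"] a by simp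
  next
    case (2 x)
    then show ?thesis using that[of x "local_zero a"] a by simp
  next
    case (3 y)
    then show ?thesis using that[of "local_zero a" y] a by simp
  qed (use that in blast)
qed

text \<open>Writing \<open>e = u \<oplus> g \<oplus> v\<close>, both \<open>g\<close> and \<open>e\<close> turn out to be the local zero of
  \<open>e \<oplus> u \<oplus> g\<close>.\<close>
lemma E_plus_primitive:
  assumes e: "e \<in> E_plus S" and g: "g \<in> E_plus S" and eg: "e \<oplus> g = g" and ge: "g \<oplus> e = g"
  shows "g = e"
proof -
  have eS: "e \<in> scar S" "e \<oplus> e = e" and gS: "g \<in> scar S" "g \<oplus> g = g" using e g by auto
  obtain u v where uv: "u \<in> scar S" "v \<in> scar S" "e = u \<oplus> g \<oplus> v"
    using add_ideal_sandwich[OF gS(1) eS(1)] .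
  define a where "a = e \<oplus> u \<oplus> g"
  define b where "b = g \<oplus> v \<oplus> e"
  have ab_in: "a \<in> scar S" "b \<in> scar S" using a_def b_def uv eS gS by auto
  have ag: "a \<oplus> g = a" unfolding a_def using uv eS gS by simp
  have "a \<oplus> b = e \<oplus> (u \<oplus> g \<oplus> v) \<oplus> e" unfolding a_def b_def using uv(1,2) e g by simp
  also have "\<dots> = e \<oplus> e \<oplus> e" by (simp only: uv(3)[symmetric])
  also have "\<dots> = e" using eS by (simp del: assoc)
  finally have ab: "a \<oplus> b = e" .
  have e1: "e = local_zero a \<oplus> e" using ab ab_in by (metis assoc(1) local_zero(1,2))
  have za: "local_zero a = local_zero a \<oplus> g"
    using local_zero_alt[OF ab_in(1)] ag ab_in gS rel_inv(1)[OF ab_in(1)] by (metis assoc(1))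
  have "g = local_zero a \<oplus> e \<oplus> g" using e1 eg by simp
  also have "\<dots> = local_zero a" using za eg ab_in eS gS by simp
  finally show ?thesis using e1 ge by simp
qed

end

locale rectangular_skew_semiring = completely_simple_semiring +
  assumes E_plus_add_closed [simp]: "e \<in> E_plus S \<Longrightarrow> f \<in> E_plus S \<Longrightarrow> e \<oplus> f \<in> E_plus S"
begin

lemma E_plus_rectangular:
  assumes "e \<in> E_plus S" "f \<in> E_plus S" shows "e \<oplus> (f \<oplus> e) = e"
proof -
  have efe: "e \<oplus> f \<oplus> e \<in> E_plus S" using assms by simp
  have "e \<oplus> (e \<oplus> f \<oplus> e) = e \<oplus> f \<oplus> e" using assms by (simp flip: assoc(1))
  moreover have "e \<oplus> f \<oplus> e \<oplus> e = e \<oplus> f \<oplus> e" using assms by simp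
  ultimately have "e \<oplus> f \<oplus> e = e" by (rule E_plus_primitive[OF assms(1) efe])
  then show ?thesis using assms by simp
qed

lemma E_plus_drop_middle:
  assumes "e \<in> E_plus S" "f \<in> E_plus S" "g \<in> E_plus S" shows "e \<oplus> (f \<oplus> g) = e \<oplus> g"
proof -
  have "e \<oplus> (f \<oplus> g) = e \<oplus> (f \<oplus> (g \<oplus> (e \<oplus> g)))" using E_plus_rectangular[OF assms(3,1)] by simp
  also have "\<dots> = e \<oplus> ((f \<oplus> g) \<oplus> e) \<oplus> g" using assms by simp
  also have "\<dots> = e \<oplus> g" using E_plus_rectangular[of e "f \<oplus> g"] assms by simp
  finally show ?thesis .
qed

lemma add_E_plus_cancel [simp]:
  assumes "e \<in> E_plus S" "w \<in> scar S" "v \<in> scar S" shows "w \<oplus> (e \<oplus> v) = w \<oplus> v"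
proof -
  have "w \<oplus> (e \<oplus> v) = w \<oplus> (local_zero w \<oplus> (e \<oplus> (local_zero v \<oplus> v)))" using assms by simp
  also have "\<dots> = w \<oplus> ((local_zero w \<oplus> (e \<oplus> local_zero v)) \<oplus> v)" using assms by simp
  also have "\<dots> = w \<oplus> ((local_zero w \<oplus> local_zero v) \<oplus> v)"
    using assms E_plus_drop_middle[of "local_zero w" e "local_zero v"] by simp
  also have "\<dots> = w \<oplus> v" using assms by simp
  finally show ?thesis .
qed

lemma local_zero_unique:
  assumes "e \<in> E_plus S" "c \<in> scar S" "e \<oplus> c = c" "c \<oplus> e = c"
  shows "local_zero c = e"
proof -
  have left: "e \<oplus> local_zero c = local_zero c"
    unfolding local_zero_def using assms rel_inv(1)[OF assms(2)] by (metis assoc(1) E_plus_simps(1))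
  have right: "local_zero c \<oplus> e = local_zero c"
    unfolding local_zero_alt[OF assms(2)] using assms rel_inv(1)[OF assms(2)]
    by (metis assoc(1) E_plus_simps(1))
  have "e = e \<oplus> (local_zero c \<oplus> e)" using E_plus_rectangular[of e "local_zero c"] assms by simp
  also have "\<dots> = local_zero c" using left right assms
    by (metis assoc(1) E_plus_simps(1) local_zero(1))
  finally show ?thesis by simp
qed

lemma local_zero_E_plus_id [simp]: "e \<in> E_plus S \<Longrightarrow> local_zero e = e"
  by (rule local_zero_unique) auto

lemma local_zero_add:
  assumes "a \<in> scar S" "b \<in> scar S" shows "local_zero (a \<oplus> b) = local_zero a \<oplus> local_zero b"
  by (rule local_zero_unique) (use assms in auto)

lemma local_zero_mul:
  assumes a: "a \<in> scar S" and b: "b \<in> scar S"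
  shows "local_zero (a \<odot> b) = local_zero a \<odot> local_zero b"
proof (rule local_zero_unique)
  let ?za = "local_zero a" and ?zb = "local_zero b"
  have "a \<odot> b = (?za \<oplus> a) \<odot> (?zb \<oplus> b)" using assms by simp
  also have "\<dots> = ?za \<odot> ?zb \<oplus> (a \<odot> ?zb \<oplus> (?za \<odot> b \<oplus> a \<odot> b))"
    using assms by (simp only: distrib closed local_zero(1) assoc)
  also have "\<dots> = ?za \<odot> ?zb \<oplus> a \<odot> b" using assms by simp
  finally show "?za \<odot> ?zb \<oplus> a \<odot> b = a \<odot> b" by simp
  have "a \<odot> b = (a \<oplus> ?za) \<odot> (b \<oplus> ?zb)" using assms by simp
  also have "\<dots> = a \<odot> b \<oplus> (?za \<odot> b \<oplus> (a \<odot> ?zb \<oplus> ?za \<odot> ?zb))"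
    using assms by (simp only: distrib closed local_zero(1) assoc)
  also have "\<dots> = a \<odot> b \<oplus> ?za \<odot> ?zb" using assms by simp
  finally show "a \<odot> b \<oplus> ?za \<odot> ?zb = a \<odot> b" by simp
qed (use assms in auto)

section \<open>Decomposition of a rectangular skew ring\<close>

definition E_plus_srng :: "'a srng" where
  "E_plus_srng = \<lparr>scar = E_plus S, sadd = sadd S, smul = smul S\<rparr>"

text \<open>The maximal subgroup of \<open>(S,+)\<close> at \<open>e\<close> is not closed under \<open>\<odot>\<close>, so the product is
  pulled back into it by adding \<open>e\<close> on both sides.\<close>
definition H_srng :: "'a \<Rightarrow> 'a srng" where
  "H_srng e = \<lparr>scar = {t \<in> scar S. e \<oplus> t = t \<and> t \<oplus> e = t}, sadd = sadd S,
     smul = (\<lambda>p q. e \<oplus> (p \<odot> q \<oplus> e))\<rparr>"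

definition decompose :: "'a \<Rightarrow> 'a \<Rightarrow> 'a \<times> 'a" where
  "decompose e a = (local_zero a, e \<oplus> (a \<oplus> e))"

lemma rectangular_band_semiring_E_plus_srng: "rectangular_band_semiring E_plus_srng"
proof -
  have "semiring E_plus_srng"
    unfolding semiring_def E_plus_srng_def by (auto simp: distrib)
  moreover have "e \<odot> e = e" if "e \<in> E_plus S" for e
    using local_zero(5)[of e] that by simp
  moreover have "e \<oplus> f \<oplus> e = e" if "e \<in> E_plus S" "f \<in> E_plus S" for e f
    using E_plus_rectangular[OF that] that by simp
  ultimately show ?thesis
    unfolding rectangular_band_semiring_def by (simp add: E_plus_srng_def)
qed

lemma H_srng_mem: "t \<in> scar (H_srng e) \<longleftrightarrow> t \<in> scar S \<and> e \<oplus> t = t \<and> t \<oplus> e = t"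
  unfolding H_srng_def by simp

lemma H_srng_ops [simp]: "sadd (H_srng e) = sadd S" "smul (H_srng e) p q = e \<oplus> (p \<odot> q \<oplus> e)"
  unfolding H_srng_def by simp_all

lemma H_srng_sandwich:
  assumes "e \<in> E_plus S" "a \<in> scar S" shows "e \<oplus> (a \<oplus> e) \<in> scar (H_srng e)"
  using assms unfolding H_srng_mem by simp

lemma add_group_zero_H_srng:
  assumes e: "e \<in> E_plus S" shows "add_group_zero (H_srng e) e"
proof -
  have inverse: "\<exists>t'\<in>scar (H_srng e). t \<oplus> t' = e \<and> t' \<oplus> t = e"
    if t: "t \<in> scar S" "e \<oplus> t = t" "t \<oplus> e = t" for t
  proof -
    have zt: "local_zero t = e" by (rule local_zero_unique) (use e t in auto)
    let ?t' = "e \<oplus> (rel_inv t \<oplus> e)"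
    have "t \<oplus> ?t' = local_zero t \<oplus> e"
      unfolding local_zero_def using e t rel_inv(1)[OF t(1)] by simp
    moreover have "?t' \<oplus> t = e \<oplus> local_zero t"
      unfolding local_zero_alt[OF t(1)] using e t rel_inv(1)[OF t(1)] by simp
    ultimately show ?thesis
      using H_srng_sandwich[OF e rel_inv(1)[OF t(1)]] zt e by auto
  qed
  show ?thesis
    unfolding add_group_zero_def using e inverse by (auto simp: H_srng_mem)
qed

lemma semiring_H_srng:
  assumes e: "e \<in> E_plus S" shows "semiring (H_srng e)"
proof -
  have "sadd (H_srng e) a b \<in> scar (H_srng e) \<and> smul (H_srng e) a b \<in> scar (H_srng e)"
    if "a \<in> scar (H_srng e)" "b \<in> scar (H_srng e)" for a b
  proof -
    have a: "a \<in> scar S" "e \<oplus> a = a" and b: "b \<in> scar S" "b \<oplus> e = b"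
      using that unfolding H_srng_mem by auto
    have "e \<oplus> (a \<oplus> b) = a \<oplus> b" using assoc(1)[of e a b] a b e by simp
    then show ?thesis using a b e H_srng_sandwich unfolding H_srng_mem by simp
  qed
  moreover have
    "sadd (H_srng e) (sadd (H_srng e) a b) c = sadd (H_srng e) a (sadd (H_srng e) b c) \<and>
     smul (H_srng e) (smul (H_srng e) a b) c = smul (H_srng e) a (smul (H_srng e) b c) \<and>
     smul (H_srng e) a (sadd (H_srng e) b c) =
       sadd (H_srng e) (smul (H_srng e) a b) (smul (H_srng e) a c) \<and>
     smul (H_srng e) (sadd (H_srng e) b c) a =
       sadd (H_srng e) (smul (H_srng e) b a) (smul (H_srng e) c a)"
    if "a \<in> scar (H_srng e)" "b \<in> scar (H_srng e)" "c \<in> scar (H_srng e)" for a b c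
    using that e unfolding H_srng_mem H_srng_ops by (simp add: distrib)
  ultimately show ?thesis unfolding semiring_def by blast
qed

lemma skew_ring_H_srng: "e \<in> E_plus S \<Longrightarrow> skew_ring (H_srng e)"
  unfolding skew_ring_iff using semiring_H_srng add_group_zero_H_srng by blast

lemma decompose_bij:
  assumes e: "e \<in> E_plus S"
  shows "bij_betw (decompose e) (scar S) (E_plus S \<times> scar (H_srng e))"
  unfolding bij_betw_def
proof
  have recompose: "a = local_zero a \<oplus> (e \<oplus> (a \<oplus> e) \<oplus> local_zero a)" if "a \<in> scar S" for a
    using that e by simp
  show "inj_on (decompose e) (scar S)"
    by (rule inj_onI) (metis recompose decompose_def prod.inject)
  show "decompose e ` scar S = E_plus S \<times> scar (H_srng e)"
  proof
    show "decompose e ` scar S \<subseteq> E_plus S \<times> scar (H_srng e)"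
      unfolding decompose_def using e H_srng_sandwich by auto
    show "E_plus S \<times> scar (H_srng e) \<subseteq> decompose e ` scar S"
    proof
      fix p assume "p \<in> E_plus S \<times> scar (H_srng e)"
      then obtain f t where p: "p = (f, t)" "f \<in> E_plus S" "t \<in> scar S" "e \<oplus> t = t" "t \<oplus> e = t"
        by (auto simp: H_srng_mem)
      define a where "a = f \<oplus> (t \<oplus> f)"
      have a: "a \<in> scar S" unfolding a_def using p by simp
      have "local_zero a = f" by (rule local_zero_unique) (use p a in \<open>auto simp: a_def\<close>)
      moreover have "e \<oplus> (a \<oplus> e) = t"
        unfolding a_def using p e by (metis add_E_plus_cancel assoc(1) closed(1) E_plus_simps(1))
      ultimately show "p \<in> decompose e ` scar S" using a p unfolding decompose_def by force
    qed
  qed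
qed

lemma srng_iso_decompose:
  assumes e: "e \<in> E_plus S" shows "srng_iso S (direct_prod E_plus_srng (H_srng e))"
  unfolding srng_iso_def
proof (intro exI[of _ "decompose e"] conjI ballI)
  show "bij_betw (decompose e) (scar S) (scar (direct_prod E_plus_srng (H_srng e)))"
    using decompose_bij[OF e] by (simp add: E_plus_srng_def)
next
  fix a b assume ab: "a \<in> scar S" "b \<in> scar S"
  show "decompose e (a \<oplus> b) = sadd (direct_prod E_plus_srng (H_srng e)) (decompose e a) (decompose e b)"
    unfolding decompose_def E_plus_srng_def using ab e by (simp add: local_zero_add)
  show "decompose e (a \<odot> b) = smul (direct_prod E_plus_srng (H_srng e)) (decompose e a) (decompose e b)"
    unfolding decompose_def E_plus_srng_def using ab e by (simp add: local_zero_mul distrib)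
qed

end

lemma rectangular_skew_semiringI: "rectangular_skew_ring S \<Longrightarrow> rectangular_skew_semiring S"
  unfolding rectangular_skew_ring_def completely_simple_def
  by unfold_locales auto

lemma empty_srng_decomposition:
  fixes S :: "'a srng"
  assumes "scar S = {}"
  shows "\<exists>(B :: 'a srng) (R :: 'a srng). rectangular_band_semiring B \<and> skew_ring R \<and>
           srng_iso S (direct_prod B R)"
proof -
  define B :: "'a srng" where "B = \<lparr>scar = {}, sadd = (\<lambda>a b. a), smul = (\<lambda>a b. a)\<rparr>"
  define R :: "'a srng" where
    "R = \<lparr>scar = {undefined}, sadd = (\<lambda>a b. undefined), smul = (\<lambda>a b. undefined)\<rparr>"
  have "rectangular_band_semiring B" unfolding B_def rectangular_band_semiring_def semiring_def by simp
  moreover have "skew_ring R" unfolding R_def skew_ring_def semiring_def by simp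
  moreover have "srng_iso S (direct_prod B R)" unfolding srng_iso_def B_def
    using assms by (auto simp: bij_betw_def)
  ultimately show ?thesis by blast
qed

lemma rectangular_skew_ring_decomposition:
  fixes S :: "'a srng"
  assumes "rectangular_skew_ring S"
  shows "\<exists>(B :: 'a srng) (R :: 'a srng). rectangular_band_semiring B \<and> skew_ring R \<and>
           srng_iso S (direct_prod B R)"
proof (cases "scar S = {}")
  case True
  then show ?thesis by (rule empty_srng_decomposition)
next
  case False
  then obtain c where c: "c \<in> scar S" by blast
  interpret rectangular_skew_semiring S using assms by (rule rectangular_skew_semiringI)
  have "local_zero c \<in> E_plus S" using c by simp
  then show ?thesis
    using rectangular_band_semiring_E_plus_srng skew_ring_H_srng srng_iso_decompose by blast
qed

theorem theorem3p3:
  fixes S :: "'a srng"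
  assumes "semiring S"
  shows "(rectangular_skew_ring S \<longrightarrow>
            (\<exists>(B :: 'a srng) (R :: 'a srng). rectangular_band_semiring B \<and> skew_ring R \<and>
                srng_iso S (direct_prod B R)))
       \<and> (\<forall>(B :: 'b srng) (R :: 'c srng). rectangular_band_semiring B \<and> skew_ring R \<and>
                srng_iso S (direct_prod B R) \<longrightarrow> rectangular_skew_ring S)"
  using rectangular_skew_ring_decomposition
    srng_iso_reflects_rectangular_skew_ring[OF assms] direct_prod_rectangular_skew_ring
  by blast

end
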